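(* Let $q$ be a prime power with $q\equiv 1\pmod 3$ and $q\geq 7$. If $q$ is odd, then $M(q-1,q-3)\geq (q^2-1)/2$. If $q$ is even, then $M(q-1,q-3)\geq (q-1)(q+2)/3$.
   Context: For permutations $\pi,\sigma$ of a finite set, $hd(\pi,\sigma)$ is the number of points at which they differ. $M(n,d)$ denotes the maximum number of permutations in a set $A$ of permutations of an $n$-element set such that $hd(\pi,\sigma)\geq d$ for all distinct $\pi,\sigma\in A$. *)

theory Defs
  imports "HOL-Combinatorics.Permutations" "HOL-Number_Theory.Prime_Powers" Complex_Main
begin

definition hd :: "('a \<Rightarrow> 'a) \<Rightarrow> ('a \<Rightarrow> 'a) \<Rightarrow> nat" where
  "hd \<pi> \<sigma> = card {x. \<pi> x \<noteq> \<sigma> x}"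

definition M :: "nat \<Rightarrow> nat \<Rightarrow> nat" where
  "M n d = Max {card A | A. A \<subseteq> {\<pi>. \<pi> permutes {..<n}} \<and>
                 (\<forall>\<pi>\<in>A. \<forall>\<sigma>\<in>A. \<pi> \<noteq> \<sigma> \<longrightarrow> hd \<pi> \<sigma> \<ge> d)}"

end

theory Submission
  imports Defs "HOL-Algebra.Algebraic_Closure" "HOL-Number_Theory.Residues"
begin

text \<open>
  Let \<open>F\<close> be the field with \<open>q\<close> elements and \<open>n = q - 1\<close> the number of its units. For a unit
  \<open>a\<close> and any \<open>b\<close>, the map \<open>x \<mapsto> a x + b\<close> with its root redirected to \<open>b\<close> permutes the units,
  and two such permutations agree in at most two points unless \<open>b, b' \<noteq> 0\<close>, \<open>a a' = (a + a')\<^sup>2\<close>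
  and \<open>a' b' = - a b\<close>. So all pairs \<open>(a, 0)\<close> together with any family of pairs avoiding this
  configuration give a code of minimum distance \<open>n - 2\<close>. Restricting \<open>a\<close> to a set of units with
  no solution of \<open>x y = (x + y)\<^sup>2\<close> (each unit has at most two partners, so a greedy choice keeps a
  third of them) yields \<open>n (n + 3) / 3 = (q - 1) (q + 2) / 3\<close> permutations. For odd \<open>q\<close> one keeps
  every \<open>a\<close> and asks instead that \<open>a b\<close> lie in a set of units containing no pair \<open>x, -x\<close>, which
  keeps half of them and yields \<open>n (n + 2) / 2 = (q\<^sup>2 - 1) / 2\<close>. The field \<open>F\<close> is realised as the
  set of fixed points of \<open>x \<mapsto> x\<^sup>q\<close> in an algebraic closure of \<open>\<int>/p\<close>.
\<close>

section \<open>Finite fields as Frobenius fixed points\<close>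

lemma (in cring) finsum_pascal:
  assumes f: "f \<in> UNIV \<rightarrow> carrier R"
  shows "(\<Oplus>k\<in>{..n}. [(n choose k)] \<cdot> f (Suc k)) \<oplus> (\<Oplus>k\<in>{..n}. [(n choose k)] \<cdot> f k)
       = (\<Oplus>k\<in>{..Suc n}. [(Suc n choose k)] \<cdot> f k)"
proof -
  have fc: "f k \<in> carrier R" for k using f by auto
  have "(\<Oplus>k\<in>{..n}. [(n choose k)] \<cdot> f (Suc k))
      = (\<Oplus>k\<in>{..Suc n}. [(if k = 0 then 0 else n choose (k - 1))] \<cdot> f k)"
    by (subst finsum_Suc2) (use fc in auto)
  moreover have "(\<Oplus>k\<in>{..n}. [(n choose k)] \<cdot> f k) = (\<Oplus>k\<in>{..Suc n}. [(n choose k)] \<cdot> f k)"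
    by (subst finsum_Suc) (use fc in \<open>auto simp: binomial_eq_0\<close>)
  moreover have "(\<Oplus>k\<in>{..Suc n}. [(if k = 0 then 0 else n choose (k - 1))] \<cdot> f k)
      \<oplus> (\<Oplus>k\<in>{..Suc n}. [(n choose k)] \<cdot> f k)
      = (\<Oplus>k\<in>{..Suc n}. [(if k = 0 then 0 else n choose (k - 1))] \<cdot> f k \<oplus> [(n choose k)] \<cdot> f k)"
    by (rule finsum_addf[symmetric]) (use fc in auto)
  moreover have "\<dots> = (\<Oplus>k\<in>{..Suc n}. [(Suc n choose k)] \<cdot> f k)"
  proof (intro finsum_cong')
    fix k
    show "[(if k = 0 then 0 else n choose (k - 1))] \<cdot> f k \<oplus> [(n choose k)] \<cdot> f k
        = [(Suc n choose k)] \<cdot> f k"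
      using fc[of k] by (cases k) (simp_all add: add.nat_pow_mult)
  qed (use fc in auto)
  ultimately show ?thesis by simp
qed

lemma (in cring) binomial_expansion:
  assumes x: "x \<in> carrier R" and y: "y \<in> carrier R"
  shows "(x \<oplus> y) [^] n = (\<Oplus>k\<in>{..n}. [(n choose k)] \<cdot> (x [^] k \<otimes> y [^] (n - k)))"
proof (induction n)
  case 0
  show ?case using x y by simp
next
  case (Suc n)
  define f where "f k = x [^] k \<otimes> y [^] (Suc n - k)" for k
  have fc: "f \<in> UNIV \<rightarrow> carrier R" using x y by (simp add: f_def)
  have "(x \<oplus> y) [^] Suc n = x \<otimes> (x \<oplus> y) [^] n \<oplus> y \<otimes> (x \<oplus> y) [^] n"
    using x y by (simp add: m_comm l_distr)
  also have "x \<otimes> (x \<oplus> y) [^] n = (\<Oplus>k\<in>{..n}. [(n choose k)] \<cdot> f (Suc k))"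
    unfolding Suc using x y
  proof (subst finsum_rdistr)
    show "(\<Oplus>k\<in>{..n}. x \<otimes> [(n choose k)] \<cdot> (x [^] k \<otimes> y [^] (n - k)))
        = (\<Oplus>k\<in>{..n}. [(n choose k)] \<cdot> f (Suc k))"
    proof (intro finsum_cong')
      fix k assume "k \<in> {..n}"
      then show "x \<otimes> [(n choose k)] \<cdot> (x [^] k \<otimes> y [^] (n - k)) = [(n choose k)] \<cdot> f (Suc k)"
        using x y by (simp add: add_pow_rdistr f_def m_assoc[symmetric] nat_pow_Suc2 Suc_diff_le
              del: nat_pow_Suc) (simp add: m_comm)
    qed (use fc in auto)
  qed auto
  also have "y \<otimes> (x \<oplus> y) [^] n = (\<Oplus>k\<in>{..n}. [(n choose k)] \<cdot> f k)"
    unfolding Suc using x y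
  proof (subst finsum_rdistr)
    show "(\<Oplus>k\<in>{..n}. y \<otimes> [(n choose k)] \<cdot> (x [^] k \<otimes> y [^] (n - k)))
        = (\<Oplus>k\<in>{..n}. [(n choose k)] \<cdot> f k)"
    proof (intro finsum_cong')
      fix k assume "k \<in> {..n}"
      then have "Suc n - k = Suc (n - k)" by simp
      then show "y \<otimes> [(n choose k)] \<cdot> (x [^] k \<otimes> y [^] (n - k)) = [(n choose k)] \<cdot> f k"
        using x y by (simp add: add_pow_rdistr f_def m_lcomm m_comm)
    qed (use fc in auto)
  qed auto
  finally show ?case using finsum_pascal[OF fc] by (simp add: f_def)
qed

lemma (in ring) add_pow_eq_zero_of_char_dvd:
  fixes p m :: nat
  assumes char: "[p] \<cdot> \<one> = \<zero>" and "p dvd m" and z: "z \<in> carrier R"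
  shows "[m] \<cdot> z = \<zero>"
proof -
  obtain k where "m = p * k" using \<open>p dvd m\<close> by blast
  moreover have "[p] \<cdot> z = \<zero>" using add_pow_ldistr[of \<one> z p] char z by simp
  ultimately show ?thesis using z by (simp add: add.nat_pow_pow[symmetric])
qed

lemma (in cring) frobenius_add:
  fixes p :: nat
  assumes p: "Factorial_Ring.prime p" and char: "[p] \<cdot> \<one> = \<zero>"
    and x: "x \<in> carrier R" and y: "y \<in> carrier R"
  shows "(x \<oplus> y) [^] p = x [^] p \<oplus> y [^] p"
proof -
  define g where "g k = [(p choose k)] \<cdot> (x [^] k \<otimes> y [^] (p - k))" for k
  have gc: "g k \<in> carrier R" for k using x y by (simp add: g_def)
  have p0: "p > 0" using p prime_gt_0_nat by blast
  have "{..p} = insert 0 (insert p {1..<p})" using p0 by auto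
  then have "(x \<oplus> y) [^] p = g 0 \<oplus> (g p \<oplus> (\<Oplus>k\<in>{1..<p}. g k))"
    using binomial_expansion[OF x y, of p] p0 gc by (simp add: g_def[symmetric] finsum_insert Pi_iff)
  also have "(\<Oplus>k\<in>{1..<p}. g k) = \<zero>"
  proof (rule add.finprod_one_eqI)
    fix k assume "k \<in> {1..<p}"
    then have "p dvd (p choose k)" using p by (intro dvd_choose_prime) auto
    then show "g k = \<zero>" unfolding g_def using x y char by (simp add: add_pow_eq_zero_of_char_dvd)
  qed
  finally show ?thesis using x y p0 by (simp add: g_def a_comm)
qed

lemma (in cring) frobenius_power_add:
  fixes p :: nat
  assumes p: "Factorial_Ring.prime p" and char: "[p] \<cdot> \<one> = \<zero>"
    and x: "x \<in> carrier R" and y: "y \<in> carrier R"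
  shows "(x \<oplus> y) [^] (p ^ k) = x [^] (p ^ k) \<oplus> y [^] (p ^ k)"
proof (induction k)
  case (Suc k)
  have "(x \<oplus> y) [^] (p ^ Suc k) = ((x \<oplus> y) [^] (p ^ k)) [^] p"
    using x y nat_pow_pow[of "x \<oplus> y" "p ^ k" p] by (simp add: mult.commute)
  also have "\<dots> = (x [^] (p ^ k)) [^] p \<oplus> (y [^] (p ^ k)) [^] p"
    unfolding Suc using x y by (intro frobenius_add[OF p char]) auto
  finally show ?case
    using x y nat_pow_pow[of x "p ^ k" p] nat_pow_pow[of y "p ^ k" p] by (simp add: mult.commute)
qed (use x y in simp)

lemma (in cring) frobenius_power_minus:
  fixes p :: nat
  assumes p: "Factorial_Ring.prime p" and char: "[p] \<cdot> \<one> = \<zero>" and x: "x \<in> carrier R"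
  shows "(\<ominus> x) [^] (p ^ k) = \<ominus> (x [^] (p ^ k))"
proof -
  have "(\<ominus> x) [^] (p ^ k) \<oplus> x [^] (p ^ k) = (\<ominus> x \<oplus> x) [^] (p ^ k)"
    using frobenius_power_add[OF p char, of "\<ominus> x" x k] x by simp
  also have "\<dots> = \<zero>" using x prime_gt_0_nat[OF p] by (simp add: l_neg nat_pow_zero)
  finally show ?thesis using x by (simp add: add.inv_equality)
qed

lemma (in field) frobenius_fixed_points_subfield:
  fixes p :: nat
  assumes p: "Factorial_Ring.prime p" and char: "[p] \<cdot> \<one> = \<zero>"
  shows "subfield {x \<in> carrier R. x [^] (p ^ k) = x} R"
proof (rule subfieldI'[OF subringI])
  fix x assume x: "x \<in> {x \<in> carrier R. x [^] (p ^ k) = x} - {\<zero>}"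
  then have "x \<in> Units R" by (simp add: field_Units)
  then have ic: "inv x \<in> carrier R" by simp
  have "x \<otimes> inv x [^] (p ^ k) = (x \<otimes> inv x) [^] (p ^ k)"
    using x ic by (simp add: nat_pow_distrib)
  also have "\<dots> = \<one>" using \<open>x \<in> Units R\<close> by simp
  finally have "inv x = inv x [^] (p ^ k)" using x ic by (intro comm_inv_char) auto
  then show "inv x \<in> {x \<in> carrier R. x [^] (p ^ k) = x}" using ic by simp
qed (auto simp: frobenius_power_add[OF p char] frobenius_power_minus[OF p char] nat_pow_distrib)

lemma ring_hom_add_pow:
  assumes "ring R" "ring S" "h \<in> ring_hom R S" "x \<in> carrier R"
  shows "h ([n] \<cdot>\<^bsub>R\<^esub> x) = [(n :: nat)] \<cdot>\<^bsub>S\<^esub> h x"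
proof -
  interpret ring_hom_ring R S h using assms by (intro ring_hom_ringI2) auto
  show ?thesis using assms(4) by (induction n) (simp_all add: R.add.nat_pow_Suc S.add.nat_pow_Suc)
qed

lemma (in domain) poly_ring_char:
  assumes "[(p :: nat)] \<cdot> \<one> = \<zero>"
  shows "[p] \<cdot>\<^bsub>poly_ring R\<^esub> \<one>\<^bsub>poly_ring R\<^esub> = \<zero>\<^bsub>poly_ring R\<^esub>"
proof -
  have "poly_of_const \<in> ring_hom R (poly_ring R)"
    using canonical_embedding_is_hom[OF carrier_is_subring] by simp
  then have "poly_of_const ([p] \<cdot> \<one>) = [p] \<cdot>\<^bsub>poly_ring R\<^esub> poly_of_const \<one>"
    by (intro ring_hom_add_pow ring_axioms univ_poly_is_ring[OF carrier_is_subring]) simp_all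
  then show ?thesis using assms by (simp add: poly_of_const_def univ_poly_one univ_poly_zero)
qed

lemma (in field) count_roots_linear_factor:
  assumes a: "a \<in> carrier R" and g: "g \<in> carrier (poly_ring R)" and "eval g a \<noteq> \<zero>"
  shows "count (roots ([\<one>, \<ominus> a] \<otimes>\<^bsub>poly_ring R\<^esub> g)) a = 1"
proof -
  have "g \<noteq> []" using \<open>eval g a \<noteq> \<zero>\<close> by auto
  moreover have "a \<notin># roots g"
    using \<open>eval g a \<noteq> \<zero>\<close> roots_mem_iff_is_root[OF g] by (simp add: is_root_def)
  ultimately show ?thesis
    using poly_mult_degree_one_monic_imp_same_roots[OF a g] by (simp add: not_in_iff)
qed

lemma (in field) frobenius_polynomial_simple_root:
  fixes p :: nat
  assumes p: "Factorial_Ring.prime p" and char: "[p] \<cdot> \<one> = \<zero>" and "k > 0"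
    and a: "a \<in> carrier R" and fixed: "a [^] (p ^ k) = a"
  shows "count (roots (X [^]\<^bsub>poly_ring R\<^esub> (p ^ k) \<ominus>\<^bsub>poly_ring R\<^esub> X)) a = 1"
proof -
  interpret UP: domain "poly_ring R" using univ_poly_is_domain[OF carrier_is_subring] .
  interpret C: ring_hom_ring R "poly_ring R" poly_of_const
    using canonical_embedding_is_hom[OF carrier_is_subring]
    by (intro ring_hom_ringI2) (auto simp: ring_axioms UP.ring_axioms)
  define q where "q = p ^ k"
  have "q > 1" unfolding q_def using \<open>k > 0\<close> prime_gt_1_nat[OF p] by (metis one_less_power)
  define c where "c = poly_of_const a"
  define Y where "Y = [\<one>, \<ominus> a]"
  have c: "c \<in> carrier (poly_ring R)" and "c [^]\<^bsub>poly_ring R\<^esub> q = c"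
    using a fixed by (simp_all add: c_def q_def C.hom_nat_pow[symmetric])
  have Y: "Y \<in> carrier (poly_ring R)"
    using a by (simp add: Y_def sym[OF univ_poly_carrier] polynomial_def)
  have "X = Y \<oplus>\<^bsub>poly_ring R\<^esub> c"
    using a by (cases "a = \<zero>") (simp_all add: Y_def c_def poly_of_const_def univ_poly_add var_def l_neg)
  \<comment> \<open>Frobenius in the polynomial ring moves the root \<open>a\<close> of \<open>X\<^sup>q - X\<close> to the root \<open>\<zero>\<close> of \<open>Y\<^sup>q - Y\<close>.\<close>
  then have "X [^]\<^bsub>poly_ring R\<^esub> q \<ominus>\<^bsub>poly_ring R\<^esub> X
      = (Y [^]\<^bsub>poly_ring R\<^esub> q \<oplus>\<^bsub>poly_ring R\<^esub> c) \<ominus>\<^bsub>poly_ring R\<^esub> (Y \<oplus>\<^bsub>poly_ring R\<^esub> c)"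
    using UP.frobenius_power_add[OF p poly_ring_char[OF char] Y c, of k] \<open>c [^]\<^bsub>poly_ring R\<^esub> q = c\<close>
    by (simp add: q_def)
  also have "\<dots> = Y [^]\<^bsub>poly_ring R\<^esub> q \<ominus>\<^bsub>poly_ring R\<^esub> Y"
    using Y c by (simp add: UP.minus_eq UP.minus_add UP.a_ac UP.r_neg2 UP.r_neg1)
  also have "\<dots> = Y \<otimes>\<^bsub>poly_ring R\<^esub> (Y [^]\<^bsub>poly_ring R\<^esub> (q - 1) \<ominus>\<^bsub>poly_ring R\<^esub> \<one>\<^bsub>poly_ring R\<^esub>)"
    using Y \<open>q > 1\<close> UP.nat_pow_Suc2[of Y "q - 1"] by (simp add: UP.minus_eq UP.r_distr UP.r_minus)
  finally have factor: "X [^]\<^bsub>poly_ring R\<^esub> q \<ominus>\<^bsub>poly_ring R\<^esub> X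
      = [\<one>, \<ominus> a] \<otimes>\<^bsub>poly_ring R\<^esub> (Y [^]\<^bsub>poly_ring R\<^esub> (q - 1) \<ominus>\<^bsub>poly_ring R\<^esub> \<one>\<^bsub>poly_ring R\<^esub>)"
    by (simp add: Y_def)
  interpret E: ring_hom_ring "poly_ring R" R "\<lambda>g. eval g a"
    using eval_ring_hom[OF carrier_is_subring a] .
  have "eval Y a = \<zero>" using a by (simp add: Y_def r_neg)
  then have "eval (Y [^]\<^bsub>poly_ring R\<^esub> (q - 1) \<ominus>\<^bsub>poly_ring R\<^esub> \<one>\<^bsub>poly_ring R\<^esub>) a = \<ominus> \<one>"
    using Y \<open>q > 1\<close> by (simp add: E.hom_nat_pow UP.minus_eq nat_pow_zero)
  moreover have "\<ominus> \<one> \<noteq> \<zero>" using one_not_zero by (metis minus_minus minus_zero one_closed)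
  ultimately show ?thesis
    unfolding q_def[symmetric] factor using Y a by (intro count_roots_linear_factor) auto
qed

lemma (in field) degree_frobenius_polynomial:
  assumes "q > 1"
  shows "degree (X [^]\<^bsub>poly_ring R\<^esub> q \<ominus>\<^bsub>poly_ring R\<^esub> X) = q"
proof -
  interpret UP: domain "poly_ring R" using univ_poly_is_domain[OF carrier_is_subring] .
  have Xc: "X \<in> carrier (poly_ring R)" using var_closed(1)[OF carrier_is_subring] .
  have "X [^]\<^bsub>poly_ring R\<^esub> q \<ominus>\<^bsub>poly_ring R\<^esub> X = poly_add (monom \<one> q) [\<ominus> \<one>, \<zero>]"
    using univ_poly_a_inv_def'[OF carrier_is_subring Xc] unitary_monom_eq_var_pow[OF carrier_is_subring]
    by (simp add: UP.minus_eq univ_poly_add var_def)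
  moreover have "polynomial (carrier R) (monom \<one> q)"
    by (rule monom_is_polynomial[OF carrier_is_subring]) simp
  moreover have "polynomial (carrier R) [\<ominus> \<one>, \<zero>]" by (simp add: polynomial_def)
  ultimately show ?thesis
    using \<open>q > 1\<close> carrier_is_subring by (simp only:) (subst poly_add_degree_eq[of "carrier R"], auto simp: monom_def)
qed

lemma (in algebraically_closed) card_frobenius_fixed_points:
  fixes p :: nat
  assumes p: "Factorial_Ring.prime p" and char: "[p] \<cdot> \<one> = \<zero>" and "k > 0"
  shows "card {x \<in> carrier L. x [^] (p ^ k) = x} = p ^ k"
proof -
  define q where "q = p ^ k"
  define S where "S = {x \<in> carrier L. x [^] q = x}"
  define P where "P = X [^]\<^bsub>poly_ring L\<^esub> q \<ominus>\<^bsub>poly_ring L\<^esub> X"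
  have "q > 1" unfolding q_def using \<open>k > 0\<close> prime_gt_1_nat[OF p] by (metis one_less_power)
  interpret UP: domain "poly_ring L" using univ_poly_is_domain[OF carrier_is_subring] .
  have P: "P \<in> carrier (poly_ring L)" using var_closed(1)[OF carrier_is_subring] by (simp add: P_def)
  have root_iff: "x \<in># roots P \<longleftrightarrow> x \<in> S" for x
  proof -
    have "eval P x = \<zero> \<longleftrightarrow> x [^] q = x" if "x \<in> carrier L"
    proof -
      interpret E: ring_hom_ring "poly_ring L" L "\<lambda>g. eval g x"
        using eval_ring_hom[OF carrier_is_subring that] .
      show ?thesis using var_closed(1)[OF carrier_is_subring] that r_right_minus_eq[of "x [^] q" x]
        by (simp add: P_def E.hom_nat_pow eval_var UP.minus_eq minus_eq)
    qed
    moreover have "P \<noteq> []" using degree_frobenius_polynomial[OF \<open>q > 1\<close>] \<open>q > 1\<close> by (auto simp: P_def)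
    ultimately show ?thesis using roots_mem_iff_is_root[OF P] by (auto simp: is_root_def S_def)
  qed
  then have "finite S" by (metis finite_set_mset finite_subset subsetI)
  have "roots P = mset_set S"
  proof (rule multiset_eqI)
    fix x
    show "count (roots P) x = count (mset_set S) x"
    proof (cases "x \<in> S")
      case True
      then show ?thesis
        using frobenius_polynomial_simple_root[OF p char \<open>k > 0\<close>] \<open>finite S\<close>
        by (simp add: S_def P_def q_def)
    qed (use root_iff \<open>finite S\<close> in \<open>simp add: count_eq_zero_iff\<close>)
  qed
  then have "card S = degree P" using roots_over_carrier[OF P] by (simp add: splitted_def)
  then show ?thesis using degree_frobenius_polynomial[OF \<open>q > 1\<close>] by (simp add: S_def P_def q_def)
qed

lemma (in residues) add_pow_one_eq: "[n] \<cdot> \<one> = int n mod m"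
proof (induction n)
  case (Suc n)
  have "[Suc n] \<cdot> \<one> = [n] \<cdot> \<one> \<oplus> \<one>" by (simp add: add.nat_pow_Suc)
  then show ?case using Suc by (simp add: res_add_eq res_one_eq mod_add_right_eq add.commute)
qed (simp add: res_zero_eq)

lemma algebraically_closed_field_of_char:
  fixes p :: nat
  assumes p: "Factorial_Ring.prime p"
  obtains L :: "((int list \<times> nat) multiset \<Rightarrow> int) ring"
  where "algebraically_closed L" and "[p] \<cdot>\<^bsub>L\<^esub> \<one>\<^bsub>L\<^esub> = \<zero>\<^bsub>L\<^esub>"
proof -
  define R where "R = residue_ring (int p)"
  interpret residues_prime p R using p unfolding R_def by unfold_locales auto
  interpret L: algebraic_closure alg_closure "indexed_const ` carrier R"
    by (rule alg_closureE(1))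
  interpret H: ring_hom_ring R alg_closure indexed_const
    using alg_closureE(2) by (intro ring_hom_ringI2) (auto simp: L.ring_axioms ring_axioms)
  have "indexed_const ([p] \<cdot>\<^bsub>R\<^esub> \<one>\<^bsub>R\<^esub>) = [p] \<cdot>\<^bsub>alg_closure\<^esub> indexed_const \<one>\<^bsub>R\<^esub>"
    by (rule ring_hom_add_pow[OF ring_axioms L.ring_axioms alg_closureE(2)]) simp
  then have "[p] \<cdot>\<^bsub>alg_closure\<^esub> \<one>\<^bsub>alg_closure\<^esub> = \<zero>\<^bsub>alg_closure\<^esub>"
    by (simp add: add_pow_one_eq res_zero_eq[symmetric])
  then show ?thesis using that L.algebraically_closed_axioms by blast
qed

lemma (in ring) one_plus_one_neq_zero_of_odd_char:
  assumes "[(p :: nat)] \<cdot> \<one> = \<zero>" and "odd p" and "\<one> \<noteq> \<zero>"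
  shows "\<one> \<oplus> \<one> \<noteq> \<zero>"
proof
  assume two: "\<one> \<oplus> \<one> = \<zero>"
  obtain m where "p = Suc (2 * m)" using \<open>odd p\<close> by (metis oddE Suc_eq_plus1)
  then have "[p] \<cdot> \<one> = [m] \<cdot> ([(2 :: nat)] \<cdot> \<one>) \<oplus> \<one>"
    by (simp add: add.nat_pow_pow add.nat_pow_Suc)
  moreover have "[(2 :: nat)] \<cdot> \<one> = \<one> \<oplus> \<one>" by (simp add: numeral_2_eq_2 add.nat_pow_Suc)
  ultimately show False using assms two by simp
qed

lemma finite_field_of_prime_power:
  assumes "primepow q"
  obtains K :: "((int list \<times> nat) multiset \<Rightarrow> int) ring"
  where "field K" and "finite (carrier K)" and "card (carrier K) = q"
    and "odd q \<Longrightarrow> \<one>\<^bsub>K\<^esub> \<oplus>\<^bsub>K\<^esub> \<one>\<^bsub>K\<^esub> \<noteq> \<zero>\<^bsub>K\<^esub>"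
proof -
  obtain p k where p: "Factorial_Ring.prime p" and "k > 0" and q: "q = p ^ k"
    using assms unfolding primepow_def by auto
  obtain L :: "((int list \<times> nat) multiset \<Rightarrow> int) ring"
    where "algebraically_closed L" and char: "[p] \<cdot>\<^bsub>L\<^esub> \<one>\<^bsub>L\<^esub> = \<zero>\<^bsub>L\<^esub>"
    using algebraically_closed_field_of_char[OF p] .
  interpret L: algebraically_closed L by fact
  define S where "S = {x \<in> carrier L. x [^]\<^bsub>L\<^esub> q = x}"
  have "card S = q" unfolding S_def q using L.card_frobenius_fixed_points[OF p char \<open>k > 0\<close>] .
  show ?thesis
  proof (rule that[of "L\<lparr>carrier := S\<rparr>"])
    show "field (L\<lparr>carrier := S\<rparr>)"
      unfolding S_def q by (intro L.subfield_iff(2) L.frobenius_fixed_points_subfield[OF p char])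
    show "finite (carrier (L\<lparr>carrier := S\<rparr>))"
      using \<open>card S = q\<close> prime_gt_0_nat[OF p] by (intro card_ge_0_finite) (simp add: q)
    show "\<one>\<^bsub>L\<lparr>carrier := S\<rparr>\<^esub> \<oplus>\<^bsub>L\<lparr>carrier := S\<rparr>\<^esub> \<one>\<^bsub>L\<lparr>carrier := S\<rparr>\<^esub> \<noteq> \<zero>\<^bsub>L\<lparr>carrier := S\<rparr>\<^esub>"
      if "odd q"
      using that q \<open>k > 0\<close> char by simp (intro L.one_plus_one_neq_zero_of_odd_char; simp)
  qed (use \<open>card S = q\<close> in simp)
qed

section \<open>Permutation codes\<close>

lemma disagreement_subset:
  assumes "\<pi> permutes A" "\<sigma> permutes A"
  shows "{x. \<pi> x \<noteq> \<sigma> x} \<subseteq> A"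
proof
  fix x assume "x \<in> {x. \<pi> x \<noteq> \<sigma> x}"
  then show "x \<in> A" using permutes_not_in[OF assms(1)] permutes_not_in[OF assms(2)] by force
qed

lemma hd_map_permutation:
  assumes f: "bij_betw f A B" and \<pi>: "\<pi> permutes A" and \<sigma>: "\<sigma> permutes A"
  shows "hd (map_permutation A f \<pi>) (map_permutation A f \<sigma>) = hd \<pi> \<sigma>"
proof -
  have inj: "inj_on f A" using f by (rule bij_betw_imp_inj_on)
  have "{y. map_permutation A f \<pi> y \<noteq> map_permutation A f \<sigma> y} = f ` {x. \<pi> x \<noteq> \<sigma> x}"
  proof (intro equalityI subsetI)
    fix y assume y: "y \<in> {y. map_permutation A f \<pi> y \<noteq> map_permutation A f \<sigma> y}"
    then have "y \<in> B"
      using disagreement_subset[OF map_permutation_permutes[OF f \<pi>] map_permutation_permutes[OF f \<sigma>]]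
      by blast
    then obtain x where "x \<in> A" "y = f x" using f by (auto simp: bij_betw_def)
    then have "\<pi> x \<noteq> \<sigma> x" using y by (auto simp: map_permutation_apply[OF inj])
    then show "y \<in> f ` {x. \<pi> x \<noteq> \<sigma> x}" using \<open>y = f x\<close> by blast
  next
    fix y assume "y \<in> f ` {x. \<pi> x \<noteq> \<sigma> x}"
    then obtain x where x: "\<pi> x \<noteq> \<sigma> x" "y = f x" by blast
    then have "x \<in> A" using disagreement_subset[OF \<pi> \<sigma>] by blast
    then have "f (\<pi> x) \<noteq> f (\<sigma> x)"
      using x(1) inj_onD[OF inj] permutes_in_image[OF \<pi>] permutes_in_image[OF \<sigma>] by blast
    then show "y \<in> {y. map_permutation A f \<pi> y \<noteq> map_permutation A f \<sigma> y}"
      using x \<open>x \<in> A\<close> by (simp add: map_permutation_apply[OF inj])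
  qed
  moreover have "inj_on f {x. \<pi> x \<noteq> \<sigma> x}"
    using inj_on_subset[OF inj disagreement_subset[OF \<pi> \<sigma>]] .
  ultimately show ?thesis by (simp add: hd_def card_image)
qed

lemma permutes_eq_of_hd_eq_0:
  assumes "finite A" "\<pi> permutes A" "\<sigma> permutes A" "hd \<pi> \<sigma> = 0"
  shows "\<pi> = \<sigma>"
proof -
  have "finite {x. \<pi> x \<noteq> \<sigma> x}"
    using finite_subset[OF disagreement_subset[OF assms(2,3)] assms(1)] .
  then have "{x. \<pi> x \<noteq> \<sigma> x} = {}" using assms(4) by (simp add: hd_def)
  then show ?thesis by auto
qed

lemma card_le_M:
  assumes S: "finite S" and perms: "C \<subseteq> {\<pi>. \<pi> permutes S}"
    and dist: "\<And>\<pi> \<sigma>. \<pi> \<in> C \<Longrightarrow> \<sigma> \<in> C \<Longrightarrow> \<pi> \<noteq> \<sigma> \<Longrightarrow> d \<le> hd \<pi> \<sigma>"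
  shows "card C \<le> M (card S) d"
proof -
  obtain f where f: "bij_betw f S {..<card S}"
    using ex_bij_betw_finite_nat[OF S] by (auto simp: atLeast0LessThan)
  let ?m = "map_permutation S f"
  have hd_eq: "hd (?m \<pi>) (?m \<sigma>) = hd \<pi> \<sigma>" if "\<pi> \<in> C" "\<sigma> \<in> C" for \<pi> \<sigma>
    using that perms by (intro hd_map_permutation[OF f]) auto
  have "inj_on ?m C"
  proof (rule inj_onI)
    fix \<pi> \<sigma> assume "\<pi> \<in> C" "\<sigma> \<in> C" "?m \<pi> = ?m \<sigma>"
    then have "hd \<pi> \<sigma> = 0" using hd_eq[of \<pi> \<sigma>] by (simp add: hd_def)
    then show "\<pi> = \<sigma>"
      using permutes_eq_of_hd_eq_0[OF S] perms \<open>\<pi> \<in> C\<close> \<open>\<sigma> \<in> C\<close> by blast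
  qed
  then have card_eq: "card (?m ` C) = card C" by (rule card_image)
  have sub: "?m ` C \<subseteq> {\<pi>. \<pi> permutes {..<card S}}"
    using perms map_permutation_permutes[OF f] by blast
  have dist': "\<forall>\<pi>'\<in>?m ` C. \<forall>\<sigma>'\<in>?m ` C. \<pi>' \<noteq> \<sigma>' \<longrightarrow> d \<le> hd \<pi>' \<sigma>'"
  proof (intro ballI impI)
    fix \<pi>' \<sigma>' assume "\<pi>' \<in> ?m ` C" "\<sigma>' \<in> ?m ` C" "\<pi>' \<noteq> \<sigma>'"
    then obtain \<pi> \<sigma> where "\<pi> \<in> C" "\<sigma> \<in> C" "\<pi>' = ?m \<pi>" "\<sigma>' = ?m \<sigma>" by (elim imageE)
    then show "d \<le> hd \<pi>' \<sigma>'" using dist hd_eq \<open>\<pi>' \<noteq> \<sigma>'\<close> by auto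
  qed
  have mem: "card C \<in> {card A | A. A \<subseteq> {\<pi>. \<pi> permutes {..<card S}} \<and>
      (\<forall>\<pi>\<in>A. \<forall>\<sigma>\<in>A. \<pi> \<noteq> \<sigma> \<longrightarrow> d \<le> hd \<pi> \<sigma>)}"
    by (intro CollectI exI[of _ "?m ` C"] conjI) (use card_eq sub dist' in auto)
  have "{card A | A. A \<subseteq> {\<pi>. \<pi> permutes {..<card S}}} = card ` Pow {\<pi>. \<pi> permutes {..<card S}}"
    by blast
  then have "finite {card A | A. A \<subseteq> {\<pi>. \<pi> permutes {..<card S}}}"
    using finite_permutations[of "{..<card S}"] by simp
  then have "finite {card A | A. A \<subseteq> {\<pi>. \<pi> permutes {..<card S}} \<and>
      (\<forall>\<pi>\<in>A. \<forall>\<sigma>\<in>A. \<pi> \<noteq> \<sigma> \<longrightarrow> d \<le> hd \<pi> \<sigma>)}"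
    by (rule finite_subset[rotated]) auto
  then show ?thesis unfolding M_def using mem by (rule Max_ge)
qed

lemma greedy_independent_set:
  fixes E :: "'a \<Rightarrow> 'a \<Rightarrow> bool"
  assumes "finite V" and "\<And>v. v \<in> V \<Longrightarrow> card {w \<in> V. w \<noteq> v \<and> (E v w \<or> E w v)} \<le> d"
  shows "\<exists>I \<subseteq> V. (\<forall>v\<in>I. \<forall>w\<in>I. v \<noteq> w \<longrightarrow> \<not> E v w) \<and> card V \<le> (d + 1) * card I"
  using assms
proof (induction V rule: finite_psubset_induct)
  case (psubset V)
  show ?case
  proof (cases "V = {}")
    case False
    then obtain v where v: "v \<in> V" by blast
    define N where "N = insert v {w \<in> V. w \<noteq> v \<and> (E v w \<or> E w v)}"
    have "N \<subseteq> V" using v by (auto simp: N_def)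
    have "card N \<le> d + 1"
      using psubset.prems[OF v] psubset.hyps(1) by (simp add: N_def card_insert_if)
    have "V - N \<subset> V" using v by (auto simp: N_def)
    have deg: "card {w \<in> V - N. w \<noteq> u \<and> (E u w \<or> E w u)} \<le> d" if "u \<in> V - N" for u
    proof -
      have "card {w \<in> V - N. w \<noteq> u \<and> (E u w \<or> E w u)} \<le> card {w \<in> V. w \<noteq> u \<and> (E u w \<or> E w u)}"
        using psubset.hyps(1) by (intro card_mono) auto
      also have "\<dots> \<le> d" using that psubset.prems by blast
      finally show ?thesis .
    qed
    obtain I where I: "I \<subseteq> V - N" "\<forall>v\<in>I. \<forall>w\<in>I. v \<noteq> w \<longrightarrow> \<not> E v w"
      "card (V - N) \<le> (d + 1) * card I"
      using psubset.IH[OF \<open>V - N \<subset> V\<close> deg] by blast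
    have "v \<notin> I" using I(1) by (auto simp: N_def)
    have "card V = card N + card (V - N)"
      using \<open>N \<subseteq> V\<close> psubset.hyps(1) by (simp add: card_Diff_subset card_mono finite_subset)
    also have "\<dots> \<le> (d + 1) + (d + 1) * card I" using \<open>card N \<le> d + 1\<close> I(3) by linarith
    also have "\<dots> = (d + 1) * card (insert v I)"
      using \<open>v \<notin> I\<close> finite_subset[OF I(1)] psubset.hyps(1) by simp
    finally have "card V \<le> (d + 1) * card (insert v I)" .
    moreover have "insert v I \<subseteq> V" using v I(1) by blast
    moreover have "\<forall>x\<in>insert v I. \<forall>w\<in>insert v I. x \<noteq> w \<longrightarrow> \<not> E x w"
      using I(1,2) unfolding N_def by blast
    ultimately show ?thesis by blast
  qed simp
qed

section \<open>Affine permutations of the units of a finite field\<close>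

lemma (in domain) linear_root_unique:
  assumes a: "a \<in> carrier R" "a \<noteq> \<zero>" and b: "b \<in> carrier R"
    and x: "x \<in> carrier R" "a \<otimes> x \<oplus> b = \<zero>" and y: "y \<in> carrier R" "a \<otimes> y \<oplus> b = \<zero>"
  shows "x = y"
proof -
  have "a \<otimes> x = a \<otimes> y" using a b x y by (metis add.right_cancel m_closed)
  then show ?thesis using a x y m_lcancel by blast
qed

lemma (in domain) quadratic_other_root:
  assumes b: "b \<in> carrier R" and c: "c \<in> carrier R"
    and w1: "w1 \<in> carrier R" "w1 \<otimes> w1 \<oplus> b \<otimes> w1 \<oplus> c = \<zero>"
    and w: "w \<in> carrier R" "w \<otimes> w \<oplus> b \<otimes> w \<oplus> c = \<zero>" and "w \<noteq> w1"
  shows "w = \<ominus> (w1 \<oplus> b)"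
proof -
  have "(w \<ominus> w1) \<otimes> (w \<oplus> w1 \<oplus> b) = (w \<otimes> w \<oplus> b \<otimes> w \<oplus> c) \<ominus> (w1 \<otimes> w1 \<oplus> b \<otimes> w1 \<oplus> c)"
    using b c w1(1) w(1) by algebra
  also have "\<dots> = \<zero>" unfolding w(2) w1(2) by simp
  finally have "(w \<ominus> w1) \<otimes> (w \<oplus> w1 \<oplus> b) = \<zero>" .
  moreover have "w \<ominus> w1 \<noteq> \<zero>" using w1 w \<open>w \<noteq> w1\<close> by simp
  ultimately have "w \<oplus> w1 \<oplus> b = \<zero>"
    using integral[of "w \<ominus> w1" "w \<oplus> w1 \<oplus> b"] b w1(1) w(1) by auto
  then have "w \<oplus> (w1 \<oplus> b) = \<zero>" using b w1(1) w(1) by (simp add: a_assoc)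
  then have "\<ominus> (w1 \<oplus> b) = w" by (rule minus_equality) (use b w1(1) w(1) in auto)
  then show ?thesis by simp
qed

locale finite_field = field R for R (structure) +
  assumes finite_carrier: "finite (carrier R)"
begin

lemma finite_Units: "finite (Units R)"
  using finite_carrier by (simp add: field_Units)

lemma card_linear_roots_le_1:
  assumes "a \<in> carrier R" "a \<noteq> \<zero>" "b \<in> carrier R"
  shows "card {x \<in> Units R. a \<otimes> x \<oplus> b = \<zero>} \<le> 1"
proof -
  have "x = y" if "x \<in> {x \<in> Units R. a \<otimes> x \<oplus> b = \<zero>}" "y \<in> {x \<in> Units R. a \<otimes> x \<oplus> b = \<zero>}" for x y
  proof -
    have "x \<in> carrier R" "a \<otimes> x \<oplus> b = \<zero>" "y \<in> carrier R" "a \<otimes> y \<oplus> b = \<zero>"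
      using that by (auto simp: field_Units)
    then show "x = y" by (rule linear_root_unique[OF assms])
  qed
  then show ?thesis using finite_Units card_le_Suc0_iff_eq[of "{x \<in> Units R. a \<otimes> x \<oplus> b = \<zero>}"]
    by (simp add: One_nat_def)
qed

lemma card_quadratic_roots_le_2:
  assumes "b \<in> carrier R" "c \<in> carrier R"
  shows "card {w \<in> Units R. w \<otimes> w \<oplus> b \<otimes> w \<oplus> c = \<zero>} \<le> 2"
proof (cases "{w \<in> Units R. w \<otimes> w \<oplus> b \<otimes> w \<oplus> c = \<zero>} = {}")
  case True
  then show ?thesis by (simp only: card.empty)
next
  case False
  then obtain w1 where w1: "w1 \<in> Units R" "w1 \<otimes> w1 \<oplus> b \<otimes> w1 \<oplus> c = \<zero>" by blast
  have "{w \<in> Units R. w \<otimes> w \<oplus> b \<otimes> w \<oplus> c = \<zero>} \<subseteq> {w1, \<ominus> (w1 \<oplus> b)}"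
  proof
    fix w assume "w \<in> {w \<in> Units R. w \<otimes> w \<oplus> b \<otimes> w \<oplus> c = \<zero>}"
    then have "w = w1 \<or> w = \<ominus> (w1 \<oplus> b)"
      using quadratic_other_root[OF assms, of w1 w] w1 by (auto simp: field_Units)
    then show "w \<in> {w1, \<ominus> (w1 \<oplus> b)}" by blast
  qed
  then have "card {w \<in> Units R. w \<otimes> w \<oplus> b \<otimes> w \<oplus> c = \<zero>} \<le> card {w1, \<ominus> (w1 \<oplus> b)}"
    by (intro card_mono) auto
  also have "\<dots> \<le> 2" by (simp add: card_insert_if)
  finally show ?thesis .
qed

text \<open>On units, \<open>a x + b\<close> misses exactly the value \<open>b\<close>; the root of \<open>a x + b\<close> is sent there.\<close>

definition affine_perm :: "'a \<Rightarrow> 'a \<Rightarrow> 'a \<Rightarrow> 'a" where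
  "affine_perm a b x =
     (if x \<notin> Units R then x else if a \<otimes> x \<oplus> b = \<zero> then b else a \<otimes> x \<oplus> b)"

lemma affine_perm_in_Units:
  assumes a: "a \<in> Units R" and b: "b \<in> carrier R" and x: "x \<in> Units R"
  shows "affine_perm a b x \<in> Units R"
proof -
  have ax: "a \<otimes> x \<in> carrier R" "a \<otimes> x \<noteq> \<zero>"
    using a x integral by (auto simp: field_Units)
  show ?thesis
  proof (cases "a \<otimes> x \<oplus> b = \<zero>")
    case True
    then have "b \<noteq> \<zero>" using ax by auto
    then show ?thesis using True x b by (simp add: affine_perm_def field_Units)
  next
    case False
    then show ?thesis using ax x b by (simp add: affine_perm_def field_Units)
  qed
qed

lemma inj_on_affine_perm:
  assumes a: "a \<in> Units R" and b: "b \<in> carrier R"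
  shows "inj_on (affine_perm a b) (Units R)"
proof (rule inj_onI)
  fix x y assume x: "x \<in> Units R" and y: "y \<in> Units R"
    and eq: "affine_perm a b x = affine_perm a b y"
  have c: "a \<in> carrier R" "a \<noteq> \<zero>" "x \<in> carrier R" "y \<in> carrier R"
    using a x y by (auto simp: field_Units)
  have ax: "a \<otimes> x \<noteq> \<zero>" "a \<otimes> y \<noteq> \<zero>" using c x y integral by (auto simp: field_Units)
  consider "a \<otimes> x \<oplus> b = \<zero>" "a \<otimes> y \<oplus> b = \<zero>" | "a \<otimes> x \<oplus> b \<noteq> \<zero>" "a \<otimes> y \<oplus> b \<noteq> \<zero>"
    | "a \<otimes> x \<oplus> b = \<zero> \<longleftrightarrow> a \<otimes> y \<oplus> b \<noteq> \<zero>" by blast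
  then show "x = y"
  proof cases
    case 1
    then show ?thesis using linear_root_unique[OF c(1,2) b c(3) _ c(4)] by blast
  next
    case 2
    then have "a \<otimes> x \<oplus> b \<ominus> b = a \<otimes> y \<oplus> b \<ominus> b" using eq x y by (simp add: affine_perm_def)
    then have "a \<otimes> x = a \<otimes> y" using c b by (simp add: a_assoc a_minus_def r_neg)
    then show ?thesis using c m_lcancel by blast
  next
    case 3
    then have "a \<otimes> x \<oplus> b = \<zero> \<oplus> b \<or> a \<otimes> y \<oplus> b = \<zero> \<oplus> b"
      using eq x y b by (auto simp: affine_perm_def split: if_splits)
    then show ?thesis using ax c b by (metis add.right_cancel m_closed zero_closed)
  qed
qed

lemma affine_perm_permutes:
  assumes "a \<in> Units R" and "b \<in> carrier R"
  shows "affine_perm a b permutes Units R"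
proof (rule bij_imp_permutes)
  have "affine_perm a b ` Units R = Units R"
    using assms affine_perm_in_Units inj_on_affine_perm finite_Units by (intro endo_inj_surj) auto
  then show "bij_betw (affine_perm a b) (Units R) (Units R)"
    using inj_on_affine_perm[OF assms] by (simp add: bij_betw_def)
qed (simp add: affine_perm_def)

text \<open>The only way for two distinct affine permutations to agree in three points.\<close>

definition affine_clash :: "'a \<Rightarrow> 'a \<Rightarrow> 'a \<Rightarrow> 'a \<Rightarrow> bool" where
  "affine_clash a b a' b' \<longleftrightarrow> b \<noteq> \<zero> \<and> b' \<noteq> \<zero> \<and> a \<noteq> a' \<and>
     a \<otimes> a' = (a \<oplus> a') \<otimes> (a \<oplus> a') \<and> a' \<otimes> b' = \<ominus> (a \<otimes> b)"

lemma affine_perm_agree_at_root: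
  assumes a: "a \<in> Units R" "a' \<in> Units R" "a \<noteq> a'" and b: "b \<in> carrier R" "b' \<in> carrier R"
    and u: "u \<in> Units R" "a \<otimes> u \<oplus> b = \<zero>"
    and agree: "affine_perm a b u = affine_perm a' b' u"
  shows "a' \<otimes> u \<oplus> b' = b"
proof (rule ccontr)
  assume "a' \<otimes> u \<oplus> b' \<noteq> b"
  then have "a' \<otimes> u \<oplus> b' = \<zero>" and "b = b'" using agree u by (auto simp: affine_perm_def split: if_splits)
  then have "a \<otimes> u = a' \<otimes> u" using u a b linear_root_unique by (metis add.right_cancel Units_closed m_closed)
  then show False using a u m_rcancel by (simp add: field_Units)
qed

lemma affine_clash_of_agreement_at_roots:
  assumes a: "a \<in> Units R" "a' \<in> Units R" "a \<noteq> a'" and b: "b \<in> carrier R" "b' \<in> carrier R"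
    and u: "u \<in> Units R" "a \<otimes> u \<oplus> b = \<zero>" "affine_perm a b u = affine_perm a' b' u"
    and v: "v \<in> Units R" "a' \<otimes> v \<oplus> b' = \<zero>" "affine_perm a b v = affine_perm a' b' v"
  shows "affine_clash a b a' b'"
proof -
  have u': "a' \<otimes> u \<oplus> b' = b" using affine_perm_agree_at_root[OF a b u] .
  have v': "a \<otimes> v \<oplus> b = b'" using affine_perm_agree_at_root[OF a(2,1) a(3)[symmetric] b(2,1) v(1,2)] v(3) by simp
  have c: "a \<in> carrier R" "a' \<in> carrier R" "u \<in> carrier R" "v \<in> carrier R"
    and nz: "a \<noteq> \<zero>" "a' \<noteq> \<zero>" "u \<noteq> \<zero>" "v \<noteq> \<zero>"
    using a u v by (auto simp: field_Units)
  have nu: "\<ominus> (a \<otimes> u) = b" and nv: "\<ominus> (a' \<otimes> v) = b'"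
    using u(2) v(2) c b by (metis add.inv_equality a_comm m_closed)+
  have "b \<noteq> \<zero>" "b' \<noteq> \<zero>" using nu nv nz c integral[of a u] integral[of a' v] by auto
  have E1: "a \<otimes> b' = b \<otimes> (a \<oplus> a')"
  proof -
    have "a \<otimes> b' = a \<otimes> (a' \<otimes> u \<oplus> b') \<oplus> a' \<otimes> (\<ominus> (a \<otimes> u))" using c b by algebra
    also have "\<dots> = b \<otimes> (a \<oplus> a')" unfolding u' nu using c b by algebra
    finally show ?thesis .
  qed
  have E2: "a' \<otimes> b = b' \<otimes> (a \<oplus> a')"
  proof -
    have "a' \<otimes> b = a' \<otimes> (a \<otimes> v \<oplus> b) \<oplus> a \<otimes> (\<ominus> (a' \<otimes> v))" using c b by algebra
    also have "\<dots> = b' \<otimes> (a \<oplus> a')" unfolding v' nv using c b by algebra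
    finally show ?thesis .
  qed
  have "(a \<otimes> a') \<otimes> (b \<otimes> b') = ((a \<oplus> a') \<otimes> (a \<oplus> a')) \<otimes> (b \<otimes> b')"
  proof -
    have "(a \<otimes> a') \<otimes> (b \<otimes> b') = (a \<otimes> b') \<otimes> (a' \<otimes> b)" using c b by algebra
    also have "\<dots> = ((a \<oplus> a') \<otimes> (a \<oplus> a')) \<otimes> (b \<otimes> b')" unfolding E1 E2 using c b by algebra
    finally show ?thesis .
  qed
  moreover have "b \<otimes> b' \<noteq> \<zero>" using b \<open>b \<noteq> \<zero>\<close> \<open>b' \<noteq> \<zero>\<close> integral[of b b'] by auto
  ultimately have K: "a \<otimes> a' = (a \<oplus> a') \<otimes> (a \<oplus> a')"
    using c b m_rcancel[of "b \<otimes> b'" "a \<otimes> a'" "(a \<oplus> a') \<otimes> (a \<oplus> a')"] by simp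
  have "a \<otimes> (a' \<otimes> b') \<ominus> a \<otimes> (\<ominus> (a \<otimes> b)) = a' \<otimes> (a \<otimes> b') \<oplus> b \<otimes> (a \<otimes> a)"
    using c b by algebra
  also have "\<dots> = b \<otimes> ((a \<oplus> a') \<otimes> (a \<oplus> a') \<ominus> a \<otimes> a')" unfolding E1 using c b by algebra
  also have "\<dots> = \<zero>" using K c b by (simp add: a_minus_def r_neg)
  finally have "a \<otimes> (a' \<otimes> b') = a \<otimes> (\<ominus> (a \<otimes> b))" using c b by simp
  then have "a' \<otimes> b' = \<ominus> (a \<otimes> b)" using c b nz m_lcancel by simp
  then show ?thesis using K \<open>b \<noteq> \<zero>\<close> \<open>b' \<noteq> \<zero>\<close> a(3) by (simp add: affine_clash_def)
qed

lemma card_affine_coincidence_le_1: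
  assumes a: "a \<in> carrier R" "a' \<in> carrier R" "a \<noteq> a'" and b: "b \<in> carrier R" "b' \<in> carrier R"
  shows "card {x \<in> Units R. a \<otimes> x \<oplus> b = a' \<otimes> x \<oplus> b'} \<le> 1"
proof -
  have "a \<otimes> x \<oplus> b = a' \<otimes> x \<oplus> b' \<longleftrightarrow> (a \<ominus> a') \<otimes> x \<oplus> (b \<ominus> b') = \<zero>" if "x \<in> carrier R" for x
  proof -
    have "(a \<ominus> a') \<otimes> x \<oplus> (b \<ominus> b') = (a \<otimes> x \<oplus> b) \<ominus> (a' \<otimes> x \<oplus> b')" using a b that by algebra
    then show ?thesis using a b that by simp
  qed
  then have "{x \<in> Units R. a \<otimes> x \<oplus> b = a' \<otimes> x \<oplus> b'} = {x \<in> Units R. (a \<ominus> a') \<otimes> x \<oplus> (b \<ominus> b') = \<zero>}"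
    by (auto simp: field_Units)
  also have "card \<dots> \<le> 1" using a b by (intro card_linear_roots_le_1) simp_all
  finally show ?thesis .
qed

lemma card_affine_agreement_le_2:
  assumes a: "a \<in> Units R" "a' \<in> Units R" and b: "b \<in> carrier R" "b' \<in> carrier R"
    and "(a, b) \<noteq> (a', b')" and "\<not> affine_clash a b a' b'"
  shows "card {x \<in> Units R. affine_perm a b x = affine_perm a' b' x} \<le> 2"
proof -
  define A where "A = {x \<in> Units R. affine_perm a b x = affine_perm a' b' x}"
  define Z where "Z = {x \<in> Units R. a \<otimes> x \<oplus> b = \<zero>}"
  define Z' where "Z' = {x \<in> Units R. a' \<otimes> x \<oplus> b' = \<zero>}"
  define D where "D = {x \<in> Units R. a \<otimes> x \<oplus> b = a' \<otimes> x \<oplus> b'}"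
  have c: "a \<in> carrier R" "a' \<in> carrier R" "a \<noteq> \<zero>" "a' \<noteq> \<zero>" using a by (auto simp: field_Units)
  have fin: "finite D" "finite Z" "finite Z'" using finite_Units by (auto simp: D_def Z_def Z'_def)
  have "card Z \<le> 1" "card Z' \<le> 1"
    unfolding Z_def Z'_def using card_linear_roots_le_1[OF c(1,3) b(1)] card_linear_roots_le_1[OF c(2,4) b(2)]
    by simp_all
  have A_sub: "A \<subseteq> D \<union> Z \<union> Z'" by (auto simp: A_def D_def Z_def Z'_def affine_perm_def)
  have card_le: "card A \<le> card D + card Y" if "A \<subseteq> D \<union> Y" "finite Y" for Y
    using card_mono[OF _ that(1)] card_Un_le[of D Y] fin that(2) by (meson finite_UnI le_trans)
  show ?thesis
  proof (cases "a = a'")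
    case True
    then have "D = {}" using \<open>(a, b) \<noteq> (a', b')\<close> c b by (auto simp: D_def field_Units)
    then show ?thesis
      using card_le[of "Z \<union> Z'"] A_sub fin \<open>card Z \<le> 1\<close> \<open>card Z' \<le> 1\<close> card_Un_le[of Z Z']
      unfolding A_def by simp
  next
    case False
    have "card D \<le> 1" unfolding D_def using c b False by (intro card_affine_coincidence_le_1)
    \<comment> \<open>agreements at a root of each of the two affine maps are exactly the excluded configuration\<close>
    have "A \<inter> Z = {} \<or> A \<inter> Z' = {}"
    proof (rule ccontr)
      assume "\<not> (A \<inter> Z = {} \<or> A \<inter> Z' = {})"
      then obtain u v where "u \<in> A \<inter> Z" "v \<in> A \<inter> Z'" by blast
      then have "affine_clash a b a' b'"
        using False a b
        by (intro affine_clash_of_agreement_at_roots[where u = u and v = v]) (auto simp: A_def Z_def Z'_def)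
      then show False using \<open>\<not> affine_clash a b a' b'\<close> by contradiction
    qed
    then have "A \<subseteq> D \<union> Z \<or> A \<subseteq> D \<union> Z'" using A_sub by blast
    then show ?thesis
      using card_le[of Z] card_le[of Z'] fin \<open>card D \<le> 1\<close> \<open>card Z \<le> 1\<close> \<open>card Z' \<le> 1\<close>
      unfolding A_def by fastforce
  qed
qed

lemma hd_affine_perm_ge:
  assumes a: "a \<in> Units R" "a' \<in> Units R" and b: "b \<in> carrier R" "b' \<in> carrier R"
    and "(a, b) \<noteq> (a', b')" and "\<not> affine_clash a b a' b'"
  shows "card (Units R) - 2 \<le> hd (affine_perm a b) (affine_perm a' b')"
proof -
  define A where "A = {x \<in> Units R. affine_perm a b x = affine_perm a' b' x}"
  have "{x. affine_perm a b x \<noteq> affine_perm a' b' x} = Units R - A"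
    by (auto simp: A_def affine_perm_def)
  then have "hd (affine_perm a b) (affine_perm a' b') = card (Units R) - card A"
    using finite_Units by (simp add: hd_def A_def card_Diff_subset finite_subset)
  moreover have "card A \<le> 2" unfolding A_def using assms by (rule card_affine_agreement_le_2)
  ultimately show ?thesis by simp
qed

lemma card_affine_code_le_M:
  assumes I: "I \<subseteq> Units R \<times> carrier R"
    and no_clash: "\<And>a b a' b'. (a, b) \<in> I \<Longrightarrow> (a', b') \<in> I \<Longrightarrow> (a, b) \<noteq> (a', b') \<Longrightarrow>
      \<not> affine_clash a b a' b'"
    and "3 \<le> card (Units R)"
  shows "card I \<le> M (card (Units R)) (card (Units R) - 2)"
proof -
  let ?perm = "\<lambda>(a, b). affine_perm a b"
  have hd_ge: "card (Units R) - 2 \<le> hd (?perm p) (?perm p')" if "p \<in> I" "p' \<in> I" "p \<noteq> p'" for p p'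
  proof -
    obtain a b a' b' where p: "p = (a, b)" "p' = (a', b')" by fastforce
    then have "a \<in> Units R" "a' \<in> Units R" "b \<in> carrier R" "b' \<in> carrier R"
      using that I by auto
    moreover have "\<not> affine_clash a b a' b'" using no_clash that p by simp
    ultimately show ?thesis using p that(3) hd_affine_perm_ge by simp
  qed
  have "inj_on ?perm I"
  proof (rule inj_onI)
    fix p p' assume "p \<in> I" "p' \<in> I" "?perm p = ?perm p'"
    then show "p = p'" using hd_ge[of p p'] \<open>3 \<le> card (Units R)\<close> by (auto simp: hd_def)
  qed
  then have "card I = card (?perm ` I)" by (simp add: card_image)
  also have "\<dots> \<le> M (card (Units R)) (card (Units R) - 2)"
  proof (rule card_le_M[OF finite_Units])
    show "?perm ` I \<subseteq> {\<pi>. \<pi> permutes Units R}" using I affine_perm_permutes by auto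
    show "card (Units R) - 2 \<le> hd \<pi> \<sigma>" if "\<pi> \<in> ?perm ` I" "\<sigma> \<in> ?perm ` I" "\<pi> \<noteq> \<sigma>" for \<pi> \<sigma>
      using that hd_ge by auto
  qed
  finally show ?thesis .
qed

lemma large_subset_without_opposites:
  assumes two: "\<one> \<oplus> \<one> \<noteq> \<zero>"
  obtains P where "P \<subseteq> Units R" "\<forall>x\<in>P. \<ominus> x \<notin> P" "card (Units R) \<le> 2 * card P"
proof -
  have "card {w \<in> Units R. w \<noteq> v \<and> (w = \<ominus> v \<or> v = \<ominus> w)} \<le> 1" if "v \<in> Units R" for v
  proof -
    have "{w \<in> Units R. w \<noteq> v \<and> (w = \<ominus> v \<or> v = \<ominus> w)} \<subseteq> {\<ominus> v}"
    proof
      fix w assume "w \<in> {w \<in> Units R. w \<noteq> v \<and> (w = \<ominus> v \<or> v = \<ominus> w)}"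
      then have "w \<in> carrier R" "w = \<ominus> v \<or> v = \<ominus> w" by auto
      then show "w \<in> {\<ominus> v}" using minus_minus[of w] by auto
    qed
    then have "card {w \<in> Units R. w \<noteq> v \<and> (w = \<ominus> v \<or> v = \<ominus> w)} \<le> card {\<ominus> v}"
      by (rule card_mono[rotated]) simp
    then show ?thesis by simp
  qed
  then have "\<exists>P\<subseteq>Units R. (\<forall>v\<in>P. \<forall>w\<in>P. v \<noteq> w \<longrightarrow> w \<noteq> \<ominus> v) \<and> card (Units R) \<le> (1 + 1) * card P"
    by (rule greedy_independent_set[OF finite_Units])
  then obtain P where P: "P \<subseteq> Units R" "\<forall>v\<in>P. \<forall>w\<in>P. v \<noteq> w \<longrightarrow> w \<noteq> \<ominus> v"
    "card (Units R) \<le> 2 * card P"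
    by auto
  have opp: "\<ominus> x \<notin> P" if "x \<in> P" for x
  proof
    assume "\<ominus> x \<in> P"
    have x: "x \<in> carrier R" "x \<noteq> \<zero>" using that P(1) by (auto simp: field_Units)
    then have "(\<one> \<oplus> \<one>) \<otimes> x \<noteq> \<zero>" using two integral[of "\<one> \<oplus> \<one>" x] by auto
    then have "\<ominus> x \<noteq> x" using x r_neg[of x] by (auto simp: l_distr)
    then show False using P(2)[rule_format, OF that \<open>\<ominus> x \<in> P\<close>] by auto
  qed
  show ?thesis by (rule that[OF P(1) _ P(3)]) (use opp in blast)
qed

lemma large_subset_without_product_sum_square:
  obtains Q where "Q \<subseteq> Units R"
    "\<forall>x\<in>Q. \<forall>y\<in>Q. x \<noteq> y \<longrightarrow> x \<otimes> y \<noteq> (x \<oplus> y) \<otimes> (x \<oplus> y)"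
    "card (Units R) \<le> 3 * card Q"
proof -
  define E where "E x y \<longleftrightarrow> x \<otimes> y = (x \<oplus> y) \<otimes> (x \<oplus> y)" for x y
  \<comment> \<open>\<open>E v w\<close> says that \<open>w\<close> is a root of \<open>w\<^sup>2 + v w + v\<^sup>2\<close>, so \<open>v\<close> has at most two neighbours\<close>
  have "card {w \<in> Units R. w \<noteq> v \<and> (E v w \<or> E w v)} \<le> 2" if "v \<in> Units R" for v
  proof -
    have "{w \<in> Units R. w \<noteq> v \<and> (E v w \<or> E w v)} \<subseteq> {w \<in> Units R. w \<otimes> w \<oplus> v \<otimes> w \<oplus> v \<otimes> v = \<zero>}"
    proof
      fix w assume "w \<in> {w \<in> Units R. w \<noteq> v \<and> (E v w \<or> E w v)}"
      then have w: "w \<in> Units R" and "E v w \<or> E w v" by auto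
      have c: "v \<in> carrier R" "w \<in> carrier R" using that w by auto
      then have "E v w" using \<open>E v w \<or> E w v\<close> by (auto simp: E_def m_comm a_comm)
      have "w \<otimes> w \<oplus> v \<otimes> w \<oplus> v \<otimes> v = (v \<oplus> w) \<otimes> (v \<oplus> w) \<ominus> v \<otimes> w" using c by algebra
      then show "w \<in> {w \<in> Units R. w \<otimes> w \<oplus> v \<otimes> w \<oplus> v \<otimes> v = \<zero>}"
        using \<open>E v w\<close> c w by (simp add: E_def)
    qed
    then have "card {w \<in> Units R. w \<noteq> v \<and> (E v w \<or> E w v)}
        \<le> card {w \<in> Units R. w \<otimes> w \<oplus> v \<otimes> w \<oplus> v \<otimes> v = \<zero>}"
      by (rule card_mono[rotated]) (simp add: finite_Units)
    also have "\<dots> \<le> 2" using that by (intro card_quadratic_roots_le_2) auto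
    finally show ?thesis .
  qed
  then have "\<exists>Q\<subseteq>Units R. (\<forall>v\<in>Q. \<forall>w\<in>Q. v \<noteq> w \<longrightarrow> \<not> E v w) \<and> card (Units R) \<le> (2 + 1) * card Q"
    by (rule greedy_independent_set[OF finite_Units])
  then obtain Q where Q: "Q \<subseteq> Units R" "\<forall>v\<in>Q. \<forall>w\<in>Q. v \<noteq> w \<longrightarrow> \<not> E v w"
    "card (Units R) \<le> 3 * card Q"
    by auto
  show ?thesis by (rule that[OF Q(1) _ Q(3)]) (use Q(2) in \<open>auto simp: E_def\<close>)
qed

lemma card_affine_code_with_translations_le_M:
  assumes J: "J \<subseteq> Units R \<times> Units R"
    and no_clash: "\<And>a b a' b'. (a, b) \<in> J \<Longrightarrow> (a', b') \<in> J \<Longrightarrow> (a, b) \<noteq> (a', b') \<Longrightarrow>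
      \<not> affine_clash a b a' b'"
    and n: "3 \<le> card (Units R)"
  shows "card (Units R) + card J \<le> M (card (Units R)) (card (Units R) - 2)"
proof -
  have "Units R \<times> {\<zero>} \<inter> J = {}" using J by (auto simp: field_Units)
  moreover have "finite J" using J finite_Units by (meson finite_SigmaI finite_subset)
  ultimately have "card (Units R \<times> {\<zero>} \<union> J) = card (Units R) + card J"
    using finite_Units by (simp add: card_Un_disjoint card_cartesian_product)
  moreover have "card (Units R \<times> {\<zero>} \<union> J) \<le> M (card (Units R)) (card (Units R) - 2)"
  proof (rule card_affine_code_le_M[OF _ _ n])
    show "Units R \<times> {\<zero>} \<union> J \<subseteq> Units R \<times> carrier R" using J Units_closed by auto
    fix a b a' b'
    assume ab: "(a, b) \<in> Units R \<times> {\<zero>} \<union> J" "(a', b') \<in> Units R \<times> {\<zero>} \<union> J" "(a, b) \<noteq> (a', b')"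
    show "\<not> affine_clash a b a' b'"
    proof (cases "b = \<zero> \<or> b' = \<zero>")
      case False
      then have "(a, b) \<in> J" "(a', b') \<in> J" using ab(1,2) by auto
      then show ?thesis using no_clash ab(3) by blast
    qed (auto simp: affine_clash_def)
  qed
  ultimately show ?thesis by simp
qed

lemma M_lower_bound_odd_char:
  assumes two: "\<one> \<oplus> \<one> \<noteq> \<zero>" and n: "3 \<le> card (Units R)"
  shows "card (Units R) * (card (Units R) + 2) \<le> 2 * M (card (Units R)) (card (Units R) - 2)"
proof -
  obtain P where P: "P \<subseteq> Units R" "\<forall>x\<in>P. \<ominus> x \<notin> P" "card (Units R) \<le> 2 * card P"
    by (rule large_subset_without_opposites[OF two])
  define f where "f = (\<lambda>(a, c). (a, inv a \<otimes> c))"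
  define J where "J = f ` (Units R \<times> P)"
  have J: "a \<in> Units R \<and> b \<in> Units R \<and> a \<otimes> b \<in> P" if ab: "(a, b) \<in> J" for a b
  proof -
    obtain p where "(a, b) = f p" "p \<in> Units R \<times> P" using ab unfolding J_def by (rule imageE)
    moreover obtain a0 c where "p = (a0, c)" by (rule prod.exhaust)
    ultimately have "a \<in> Units R" "c \<in> P" "b = inv a \<otimes> c" by (auto simp: f_def)
    moreover have "c \<in> Units R" using P(1) \<open>c \<in> P\<close> by blast
    moreover from calculation have "a \<otimes> (inv a \<otimes> c) = (a \<otimes> inv a) \<otimes> c"
      by (intro m_assoc[symmetric]) auto
    ultimately show ?thesis by (simp add: Units_m_closed Units_closed)
  qed
  have "inj_on f (Units R \<times> P)"
  proof (rule inj_onI)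
    fix p p' assume "p \<in> Units R \<times> P" "p' \<in> Units R \<times> P" "f p = f p'"
    moreover obtain a c a' c' where "p = (a, c)" "p' = (a', c')" by (meson prod.exhaust)
    ultimately have "a = a'" "inv a \<otimes> c = inv a \<otimes> c'" "a \<in> Units R" "c \<in> Units R" "c' \<in> Units R"
      using P(1) by (auto simp: f_def)
    then have "c = c'" using Units_l_cancel[of "inv a" c c'] by (simp add: Units_closed)
    then show "p = p'" using \<open>a = a'\<close> \<open>p = (a, c)\<close> \<open>p' = (a', c')\<close> by simp
  qed
  then have "card J = card (Units R) * card P"
    by (simp add: J_def card_image card_cartesian_product)
  moreover have "card (Units R) + card J \<le> M (card (Units R)) (card (Units R) - 2)"
  proof (rule card_affine_code_with_translations_le_M[OF _ _ n])
    show "J \<subseteq> Units R \<times> Units R" using J by auto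
    show "\<not> affine_clash a b a' b'" if "(a, b) \<in> J" "(a', b') \<in> J" for a b a' b'
      using J[OF that(1)] J[OF that(2)] P(2) by (auto simp: affine_clash_def)
  qed
  ultimately have code: "card (Units R) + card (Units R) * card P \<le> M (card (Units R)) (card (Units R) - 2)"
    by simp
  have "card (Units R) * (card (Units R) + 2) = card (Units R) * card (Units R) + 2 * card (Units R)"
    by (simp add: algebra_simps)
  also have "\<dots> \<le> card (Units R) * (2 * card P) + 2 * card (Units R)"
    using mult_left_mono[OF P(3)] by simp
  also have "\<dots> = 2 * (card (Units R) + card (Units R) * card P)" by (simp add: algebra_simps)
  also have "\<dots> \<le> 2 * M (card (Units R)) (card (Units R) - 2)" using code by simp
  finally show ?thesis .
qed

lemma M_lower_bound:
  assumes n: "3 \<le> card (Units R)"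
  shows "card (Units R) * (card (Units R) + 3) \<le> 3 * M (card (Units R)) (card (Units R) - 2)"
proof -
  obtain Q where Q: "Q \<subseteq> Units R"
    "\<forall>x\<in>Q. \<forall>y\<in>Q. x \<noteq> y \<longrightarrow> x \<otimes> y \<noteq> (x \<oplus> y) \<otimes> (x \<oplus> y)"
    "card (Units R) \<le> 3 * card Q"
    by (rule large_subset_without_product_sum_square)
  have "card (Q \<times> Units R) = card Q * card (Units R)"
    using Q(1) finite_Units finite_subset by (simp add: card_cartesian_product)
  moreover have "card (Units R) + card (Q \<times> Units R) \<le> M (card (Units R)) (card (Units R) - 2)"
  proof (rule card_affine_code_with_translations_le_M[OF _ _ n])
    show "Q \<times> Units R \<subseteq> Units R \<times> Units R" using Q(1) by auto
    show "\<not> affine_clash a b a' b'" if "(a, b) \<in> Q \<times> Units R" "(a', b') \<in> Q \<times> Units R" for a b a' b'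
      using that Q(2) by (auto simp: affine_clash_def)
  qed
  ultimately have code: "card (Units R) + card Q * card (Units R) \<le> M (card (Units R)) (card (Units R) - 2)"
    by simp
  have "card (Units R) * (card (Units R) + 3) = card (Units R) * card (Units R) + 3 * card (Units R)"
    by (simp add: algebra_simps)
  also have "\<dots> \<le> 3 * card Q * card (Units R) + 3 * card (Units R)"
    using mult_right_mono[OF Q(3)] by simp
  also have "\<dots> = 3 * (card (Units R) + card Q * card (Units R))" by (simp add: algebra_simps)
  also have "\<dots> \<le> 3 * M (card (Units R)) (card (Units R) - 2)" using code by simp
  finally show ?thesis .
qed

end

theorem corollary7:
  fixes q :: nat
  assumes "primepow q" and "q mod 3 = 1" and "q \<ge> 7"
  shows "(odd q \<longrightarrow> real (M (q - 1) (q - 3)) \<ge> (real q ^ 2 - 1) / 2) \<and>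
         (even q \<longrightarrow> real (M (q - 1) (q - 3)) \<ge> (real q - 1) * (real q + 2) / 3)"
proof -
  obtain K :: "((int list \<times> nat) multiset \<Rightarrow> int) ring"
    where "field K" "finite (carrier K)" "card (carrier K) = q"
      and two: "odd q \<Longrightarrow> \<one>\<^bsub>K\<^esub> \<oplus>\<^bsub>K\<^esub> \<one>\<^bsub>K\<^esub> \<noteq> \<zero>\<^bsub>K\<^esub>"
    using finite_field_of_prime_power[OF assms(1)] by blast
  then interpret K: finite_field K by (simp add: finite_field_def finite_field_axioms_def)
  have n: "card (Units K) = q - 1"
    using \<open>card (carrier K) = q\<close> \<open>finite (carrier K)\<close> by (simp add: K.field_Units card_Diff_singleton)
  then have "3 \<le> card (Units K)" "q - 3 = card (Units K) - 2" using assms(3) by simp_all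
  show ?thesis
  proof (intro conjI impI)
    assume "odd q"
    have "(q - 1) * (q + 1) \<le> 2 * M (q - 1) (q - 3)"
      using K.M_lower_bound_odd_char[OF two[OF \<open>odd q\<close>] \<open>3 \<le> card (Units K)\<close>] n assms(3)
      by (simp add: \<open>q - 3 = card (Units K) - 2\<close>)
    then have "real ((q - 1) * (q + 1)) \<le> real (2 * M (q - 1) (q - 3))" by (simp only: of_nat_le_iff)
    then show "real (M (q - 1) (q - 3)) \<ge> (real q ^ 2 - 1) / 2"
      using assms(3) by (simp add: of_nat_diff power2_eq_square algebra_simps)
  next
    have "(q - 1) * (q + 2) \<le> 3 * M (q - 1) (q - 3)"
      using K.M_lower_bound[OF \<open>3 \<le> card (Units K)\<close>] n assms(3)
      by (simp add: \<open>q - 3 = card (Units K) - 2\<close>)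
    then have "real ((q - 1) * (q + 2)) \<le> real (3 * M (q - 1) (q - 3))" by (simp only: of_nat_le_iff)
    then show "real (M (q - 1) (q - 3)) \<ge> (real q - 1) * (real q + 2) / 3"
      using assms(3) by (simp add: of_nat_diff algebra_simps)
  qed
qed

end
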